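(* Let $n\ge1$ be an integer, $\delta\in(0,1)$, and $\lambda=\frac{9n}{8\ln\frac{2}{\delta}}$. For $z\in[0,1]$ define \[ U(z)=z+\frac34\,\frac{1-2z+\sqrt{1+4\lambda z(1-z)}}{1+\lambda},\qquad L(z)=z+\frac34\,\frac{1-2z-\sqrt{1+4\lambda z(1-z)}}{1+\lambda}. \] Then $L(z)$ is monotonically increasing with respect to $z$ on the set of $z\in[0,1]$ such that $L(z)>0$. Similarly, $U(z)$ is monotonically increasing with respect to $z$ on the set of $z\in[0,1]$ such that $U(z)<1$. *)

theory Defs
  imports Complex_Main
begin

definition lam :: "nat \<Rightarrow> real \<Rightarrow> real" where
  "lam n \<delta> = 9 * real n / (8 * ln (2 / \<delta>))"

definition Ubound :: "nat \<Rightarrow> real \<Rightarrow> real \<Rightarrow> real" where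
  "Ubound n \<delta> z = z + 3/4 * (1 - 2*z + sqrt (1 + 4 * lam n \<delta> * z * (1 - z))) / (1 + lam n \<delta>)"

definition Lbound :: "nat \<Rightarrow> real \<Rightarrow> real \<Rightarrow> real" where
  "Lbound n \<delta> z = z + 3/4 * (1 - 2*z - sqrt (1 + 4 * lam n \<delta> * z * (1 - z))) / (1 + lam n \<delta>)"

end

theory Submission
  imports Defs
begin

text \<open>Write \<open>S(z) = sqrt (1 + 4 \<lambda> z (1 - z))\<close>. Clearing denominators,
  \<open>4 (1 + \<lambda>) L(z) = (4 \<lambda> - 2) z + 3 - 3 S(z)\<close>, and squaring shows that \<open>L(z) > 0\<close>
  forces \<open>(4 \<lambda> + 1) z > 3\<close>. On that region \<open>(2 \<lambda> - 1) S(z) \<ge> 3 \<lambda> (1 - 2 z)\<close>;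
  applied at two points it bounds the difference quotient of \<open>S\<close> and gives monotonicity
  without derivatives. The upper bound is the
  reflection \<open>U(z) = 1 - L(1 - z)\<close>.\<close>

definition lower_curve :: "real \<Rightarrow> real \<Rightarrow> real" where
  "lower_curve l z = z + 3/4 * (1 - 2*z - sqrt (1 + 4 * l * z * (1 - z))) / (1 + l)"

lemma sqrt_disc_sq:
  fixes l z :: real
  assumes "l \<ge> 0" "0 \<le> z" "z \<le> 1"
  shows "(sqrt (1 + 4 * l * z * (1 - z)))^2 = 1 + 4 * l * z * (1 - z)"
  using assms by (intro real_sqrt_pow2) simp

lemma sqrt_disc_ge_1:
  fixes l z :: real
  assumes "l \<ge> 0" "0 \<le> z" "z \<le> 1"
  shows "sqrt (1 + 4 * l * z * (1 - z)) \<ge> 1"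
  using assms by simp

lemma lower_curve_scaled:
  assumes "l \<ge> 0"
  shows "4 * (1 + l) * lower_curve l z = (4*l - 2) * z + 3 - 3 * sqrt (1 + 4 * l * z * (1 - z))"
  using assms unfolding lower_curve_def by (simp add: field_simps)

lemma lower_curve_pos_imp:
  assumes l: "l \<ge> 0" and z: "0 \<le> z" "z \<le> 1" and pos: "lower_curve l z > 0"
  shows "(4*l + 1) * z > 3"
proof -
  define S where "S = sqrt (1 + 4 * l * z * (1 - z))"
  have "3 * S < (4*l - 2) * z + 3"
    using lower_curve_scaled[OF l, of z] pos l unfolding S_def[symmetric]
    by (smt (verit) mult_pos_pos)
  moreover have "S \<ge> 0" using sqrt_disc_ge_1[OF l z] unfolding S_def by simp
  ultimately have "(3 * S)^2 < ((4*l - 2) * z + 3)^2"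
    by (intro power_strict_mono) auto
  moreover have "((4*l - 2) * z + 3)^2 - (3 * S)^2 = 4 * (l + 1) * z * ((4*l + 1) * z - 3)"
    using sqrt_disc_sq[OF l z] unfolding S_def[symmetric]
    by (simp add: algebra_simps power2_eq_square)
  ultimately have "0 < (4 * (l + 1) * z) * ((4*l + 1) * z - 3)" by simp
  moreover have "4 * (l + 1) * z \<ge> 0" using l z by simp
  ultimately show ?thesis by (smt (verit) mult_nonneg_nonpos)
qed

text \<open>This is the condition \<open>L'(z) \<ge> 0\<close>, since \<open>S' = 2 \<lambda> (1 - 2 z) / S\<close>.\<close>

lemma sqrt_disc_slope_bound:
  assumes l: "l \<ge> 0" and z: "0 \<le> z" "z \<le> 1" and zl: "(4*l + 1) * z > 3"
  shows "3 * l * (1 - 2*z) \<le> (2*l - 1) * sqrt (1 + 4 * l * z * (1 - z))"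
proof -
  define S where "S = sqrt (1 + 4 * l * z * (1 - z))"
  have "4*l + 1 > 3" using zl z l by (smt (verit) mult_left_le)
  hence "(2*l - 1) * S \<ge> 0" using sqrt_disc_ge_1[OF l z] unfolding S_def by simp
  show ?thesis
  proof (cases "z \<le> 1/2")
    case False
    hence "3 * l * (1 - 2*z) \<le> 0" using l by (simp add: mult_nonneg_nonpos)
    with \<open>(2*l - 1) * S \<ge> 0\<close> show ?thesis unfolding S_def by linarith
  next
    case True
    text \<open>\<open>4 \<lambda> (4 \<lambda> + 1) z (1 - z) \<ge> 12 \<lambda> (1 - z) \<ge> 6 \<lambda> \<ge> 5 \<lambda> - 1\<close>\<close>
    have "4*l * ((4*l + 1) * z) * (1 - z) \<ge> 4*l * 3 * (1 - z)"
      using zl l True by (intro mult_right_mono mult_left_mono) auto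
    moreover have "l * (1 - z) \<ge> l * (1/2)" using l True by (intro mult_left_mono) auto
    hence "4*l * 3 * (1 - z) \<ge> 5*l - 1" using l by linarith
    moreover have "4*l * ((4*l + 1) * z) * (1 - z) = 4*l * (4*l + 1) * z * (1 - z)"
      by (simp add: mult_ac)
    ultimately have "4*l * (4*l + 1) * z * (1 - z) - (5*l - 1) \<ge> 0" by linarith
    hence "0 \<le> (l + 1) * (4*l * (4*l + 1) * z * (1 - z) - (5*l - 1))"
      using l by simp
    also have "\<dots> = (2*l - 1)^2 * (1 + 4 * l * z * (1 - z)) - (3 * l * (1 - 2*z))^2"
      by (simp add: algebra_simps power2_eq_square)
    also have "\<dots> = ((2*l - 1) * S)^2 - (3 * l * (1 - 2*z))^2"
      unfolding S_def power_mult_distrib sqrt_disc_sq[OF l z] ..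
    finally have "(3 * l * (1 - 2*z))^2 \<le> ((2*l - 1) * S)^2" by simp
    from this \<open>(2*l - 1) * S \<ge> 0\<close> show ?thesis unfolding S_def by (rule power2_le_imp_le)
  qed
qed

lemma lower_curve_mono:
  assumes l: "l \<ge> 0" and x: "0 \<le> x" and xy: "x \<le> y" and y: "y \<le> 1"
    and xl: "(4*l + 1) * x > 3" and yl: "(4*l + 1) * y > 3"
  shows "lower_curve l x \<le> lower_curve l y"
proof -
  define Sx where "Sx = sqrt (1 + 4 * l * x * (1 - x))"
  define Sy where "Sy = sqrt (1 + 4 * l * y * (1 - y))"
  have x1: "x \<le> 1" and y0: "0 \<le> y" using x xy y by auto
  have "3 * (Sy - Sx) * (Sx + Sy) = (y - x) * (2 * (3*l*(1 - 2*x)) + 2 * (3*l*(1 - 2*y)))"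
    using sqrt_disc_sq[OF l x x1] sqrt_disc_sq[OF l y0 y]
    unfolding Sx_def[symmetric] Sy_def[symmetric]
    by (simp add: algebra_simps power2_eq_square)
  also have "\<dots> \<le> (y - x) * (2 * ((2*l - 1) * Sx) + 2 * ((2*l - 1) * Sy))"
    using sqrt_disc_slope_bound[OF l x x1 xl] sqrt_disc_slope_bound[OF l y0 y yl] xy
    unfolding Sx_def Sy_def by (intro mult_left_mono) auto
  also have "\<dots> = (y - x) * (4*l - 2) * (Sx + Sy)" by (simp add: algebra_simps)
  finally have "(3 * (Sy - Sx)) * (Sx + Sy) \<le> ((y - x) * (4*l - 2)) * (Sx + Sy)"
    by (simp add: mult.assoc)
  moreover have "Sx + Sy > 0"
    using sqrt_disc_ge_1[OF l x x1] sqrt_disc_ge_1[OF l y0 y] unfolding Sx_def Sy_def by linarith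
  ultimately have "3 * (Sy - Sx) \<le> (y - x) * (4*l - 2)" by (rule mult_right_le_imp_le)
  hence "4 * (1 + l) * lower_curve l x \<le> 4 * (1 + l) * lower_curve l y"
    unfolding lower_curve_scaled[OF l] Sx_def[symmetric] Sy_def[symmetric]
    by (simp add: algebra_simps)
  thus ?thesis using l by simp
qed

lemma lower_curve_mono_on:
  assumes "l \<ge> 0"
  shows "mono_on {z. 0 \<le> z \<and> z \<le> 1 \<and> lower_curve l z > 0} (lower_curve l)"
  by (rule mono_onI) (use assms lower_curve_mono lower_curve_pos_imp in auto)

lemma lam_nonneg:
  assumes "0 < \<delta>" "\<delta> < 2"
  shows "lam n \<delta> \<ge> 0"
  using assms by (simp add: lam_def)

lemma Lbound_eq_lower_curve: "Lbound n \<delta> = lower_curve (lam n \<delta>)"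
  by (simp add: fun_eq_iff Lbound_def lower_curve_def)

lemma Ubound_reflect:
  assumes "lam n \<delta> \<ge> 0"
  shows "Ubound n \<delta> z = 1 - lower_curve (lam n \<delta>) (1 - z)"
proof -
  have "lam n \<delta> * (1 - z) * (1 - (1 - z)) = lam n \<delta> * z * (1 - z)" by simp
  thus ?thesis using assms unfolding Ubound_def lower_curve_def
    by (simp add: field_simps)
qed

theorem lemma2:
  fixes n :: nat and \<delta> :: real
  assumes "n \<ge> 1" and "0 < \<delta>" and "\<delta> < 1"
  shows "mono_on {z. 0 \<le> z \<and> z \<le> 1 \<and> Lbound n \<delta> z > 0} (Lbound n \<delta>)
       \<and> mono_on {z. 0 \<le> z \<and> z \<le> 1 \<and> Ubound n \<delta> z < 1} (Ubound n \<delta>)"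
proof
  have l: "lam n \<delta> \<ge> 0" using assms by (intro lam_nonneg) auto
  note L_mono = lower_curve_mono_on[OF l]
  show "mono_on {z. 0 \<le> z \<and> z \<le> 1 \<and> Lbound n \<delta> z > 0} (Lbound n \<delta>)"
    using L_mono by (simp add: Lbound_eq_lower_curve)
  show "mono_on {z. 0 \<le> z \<and> z \<le> 1 \<and> Ubound n \<delta> z < 1} (Ubound n \<delta>)"
  proof (rule mono_onI)
    fix x y assume "x \<in> {z. 0 \<le> z \<and> z \<le> 1 \<and> Ubound n \<delta> z < 1}"
      "y \<in> {z. 0 \<le> z \<and> z \<le> 1 \<and> Ubound n \<delta> z < 1}" "x \<le> y"
    hence "lower_curve (lam n \<delta>) (1 - y) \<le> lower_curve (lam n \<delta>) (1 - x)"
      using L_mono unfolding mono_on_def Ubound_reflect[OF l] by auto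
    thus "Ubound n \<delta> x \<le> Ubound n \<delta> y" by (simp add: Ubound_reflect[OF l])
  qed
qed

end
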